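(* Let $K\subseteq\mathbb R^{|\mathcal A|\times|\mathcal X|}$ be a convex cone of entrywise nonnegative vectors $\tilde p$ for which $\operatorname{tr}[\tilde p]:=\sum_{a}\tilde p(a\mid x)$ is independent of $x$, and such that $K\supseteq\{q\,p:q\ge0,\ p\in\mathcal Q\}$. For $\mathbf y\in\mathbf f[\mathcal Q]$ define $$G(\mathbf y)=\sup\Big\{\sum_{a\in\mathcal A,x\in\mathcal X_r}\tilde p_{a,x}(a\mid x)\ :\ \tilde p_{a,x}\in K,\ \sum_{a\in\mathcal A,x\in\mathcal X_r}\operatorname{tr}[\tilde p_{a,x}]=1,\ \sum_{a\in\mathcal A,x\in\mathcal X_r}\mathbf f[\tilde p_{a,x}]=\mathbf y\Big\}.$$ Then $H(\mathbf y):=-\log_2G(\mathbf y)$ is a randomness-bounding function for $\mathcal X_r$. Moreover, for $\hat{\mathbf f}^-\le\hat{\mathbf f}^+$ in $(\mathbb R\cup\{\pm\infty\})^t$, defining $G([\hat{\mathbf f}^-,\hat{\mathbf f}^+])$ by the same supremum with the equality constraint replaced by $\hat{\mathbf f}^-\le\sum_{a,x}\mathbf f[\tilde p_{a,x}]\le\hat{\mathbf f}^+$ (componentwise), and setting $G=1$ when this problem is infeasible, the number $-\log_2G([\hat{\mathbf f}^-,\hat{\mathbf f}^+])$ is at most $\inf\{H(\mathbf y):\mathbf y\in\mathbf f[\mathcal Q]\cap[\hat{\mathbf f}^-,\hat{\mathbf f}^+]\}$.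
   Context: Setting. A Bell device consists of $k$ boxes with finite input sets $\mathcal X_i$ and output sets $\mathcal A_i$; $\mathcal X=\prod_i\mathcal X_i$, $\mathcal A=\prod_i\mathcal A_i$. Single-round behaviors $p=(p(a\mid x))_{a\in\mathcal A,x\in\mathcal X}$; $\mathcal Q$ the (convex) set of quantum behaviors, realizable by a $k$-partite quantum state and local measurements. Bell expression $f\in\mathbb R^{|\mathcal A|\times|\mathcal X|}$ acts linearly on any vector $\tilde p$ via $f[\tilde p]=\sum_{a,x}f(a,x)\tilde p(a\mid x)$; fixed $\mathbf f=(f_1,\dots,f_t)$, $\mathbf f[\tilde p]=(f_1[\tilde p],\dots,f_t[\tilde p])$, $\mathbf f[\mathcal Q]=\{\mathbf f[p]:p\in\mathcal Q\}$. Examples of admissible $K$: the cone of unnormalized quantum behaviors or any of its NPA (semidefinite) outer relaxations. RB function: for a nonempty $\mathcal X_r\subseteq\mathcal X$, a function $H:\mathbf f[\mathcal Q]\to[0,\log_2|\mathcal A|]$ such that (1) $\min_{a\in\mathcal A,x\in\mathcal X_r}(-\log_2p(a\mid x))\ge H(\mathbf f[p])$ for all $p\in\mathcal Q$, and (2) $H(q\mathbf f[p_1]+(1-q)\mathbf f[p_2])\le qH(\mathbf f[p_1])+(1-q)H(\mathbf f[p_2])$ for all $q\in[0,1]$, $p_1,p_2\in\mathcal Q$. *)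

theory Defs
  imports "HOL-Analysis.Analysis"
begin

text \<open>Behaviours (and unnormalized behaviours) are vectors in R^(A x X),
  indexed by pairs (a, x); the entry p $ (a, x) stands for p(a|x).
  A Bell expression f is a vector of the same space, and f[p] = f \<bullet> p.\<close>

type_synonym ('a, 'x) bvec = "real ^ ('a \<times> 'x)"

definition bell :: "('a::finite, 'x::finite) bvec \<Rightarrow> ('a, 'x) bvec \<Rightarrow> real" where
  "bell f p = (\<Sum>a\<in>UNIV. \<Sum>x\<in>UNIV. f $ (a, x) * p $ (a, x))"

definition bellv :: "(('a::finite, 'x::finite) bvec) ^ 'i \<Rightarrow> ('a, 'x) bvec \<Rightarrow> real ^ 'i" where
  "bellv F p = (\<chi> i. bell (F $ i) p)"

definition behavior :: "('a::finite, 'x::finite) bvec \<Rightarrow> bool" where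
  "behavior p \<longleftrightarrow> (\<forall>a x. 0 \<le> p $ (a, x)) \<and> (\<forall>x. (\<Sum>a\<in>UNIV. p $ (a, x)) = 1)"

text \<open>tr[p] := sum_a p(a|x); for elements of the admissible cones it does not depend on x,
  so we evaluate it at an arbitrary fixed input.\<close>
definition tr :: "('a::finite, 'x::finite) bvec \<Rightarrow> real" where
  "tr p = (\<Sum>a\<in>UNIV. p $ (a, SOME x. True))"

definition admissible_cone :: "('a::finite, 'x::finite) bvec set \<Rightarrow> ('a, 'x) bvec set \<Rightarrow> bool" where
  "admissible_cone Q K \<longleftrightarrow> convex_cone K
     \<and> (\<forall>p\<in>K. \<forall>a x. 0 \<le> p $ (a, x))
     \<and> (\<forall>p\<in>K. \<forall>x x'. (\<Sum>a\<in>UNIV. p $ (a, x)) = (\<Sum>a\<in>UNIV. p $ (a, x')))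
     \<and> {q *\<^sub>R p | q p. q \<ge> 0 \<and> p \<in> Q} \<subseteq> K"

definition feas_vals :: "('a::finite, 'x::finite) bvec set \<Rightarrow> 'x set \<Rightarrow> (('a, 'x) bvec) ^ 'i
     \<Rightarrow> (real ^ 'i \<Rightarrow> bool) \<Rightarrow> real set" where
  "feas_vals K Xr F S = {(\<Sum>a\<in>UNIV. \<Sum>x\<in>Xr. P a x $ (a, x)) | P.
       (\<forall>a. \<forall>x\<in>Xr. P a x \<in> K)
     \<and> (\<Sum>a\<in>UNIV. \<Sum>x\<in>Xr. tr (P a x)) = 1
     \<and> S (\<Sum>a\<in>UNIV. \<Sum>x\<in>Xr. bellv F (P a x))}"

definition Gfun :: "('a::finite, 'x::finite) bvec set \<Rightarrow> 'x set \<Rightarrow> (('a, 'x) bvec) ^ 'i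
     \<Rightarrow> real ^ 'i \<Rightarrow> real" where
  "Gfun K Xr F y = Sup (feas_vals K Xr F (\<lambda>z. z = y))"

definition Gbox :: "('a::finite, 'x::finite) bvec set \<Rightarrow> 'x set \<Rightarrow> (('a, 'x) bvec) ^ 'i
     \<Rightarrow> ('i \<Rightarrow> ereal) \<Rightarrow> ('i \<Rightarrow> ereal) \<Rightarrow> real" where
  "Gbox K Xr F lo hi =
     (let V = feas_vals K Xr F (\<lambda>z. \<forall>i. lo i \<le> ereal (z $ i) \<and> ereal (z $ i) \<le> hi i)
      in if V = {} then 1 else Sup V)"

text \<open>Randomness-bounding function H on f[Q] for the input set Xr.
  Condition (1) uses the convention -log2 0 = +infinity, so entries p(a|x) = 0 impose no constraint.\<close>
definition rb_function :: "('a::finite, 'x::finite) bvec set \<Rightarrow> (('a, 'x) bvec) ^ 'i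
     \<Rightarrow> 'x set \<Rightarrow> (real ^ 'i \<Rightarrow> real) \<Rightarrow> bool" where
  "rb_function Q F Xr H \<longleftrightarrow>
     Xr \<noteq> {}
   \<and> (\<forall>p\<in>Q. 0 \<le> H (bellv F p) \<and> H (bellv F p) \<le> log 2 (real CARD('a)))
   \<and> (\<forall>p\<in>Q. \<forall>a. \<forall>x\<in>Xr. 0 < p $ (a, x) \<longrightarrow> H (bellv F p) \<le> - log 2 (p $ (a, x)))
   \<and> (\<forall>q\<in>{0..1}. \<forall>p1\<in>Q. \<forall>p2\<in>Q.
        H (q *\<^sub>R bellv F p1 + (1 - q) *\<^sub>R bellv F p2)
          \<le> q * H (bellv F p1) + (1 - q) * H (bellv F p2))"

end

theory Submission
  imports Defs
begin

text \<open>G(y) is the value of a linear program, and mixing feasible families for y1 and y2 yields a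
  feasible family for the mixture of y1 and y2; hence G is concave and -log2 G is convex.
  A behaviour p placed alone at one pair (a, x) is feasible for f[p], so p(a|x) \<le> G(f[p]);
  spread uniformly over the outputs of one input it shows G(f[p]) \<ge> 1/|A|; and no feasible value
  exceeds 1, since each entry of an element of K is bounded by its trace. The box constraint
  only relaxes the equality constraint.\<close>

lemma linear_tr: "linear tr"
  by (rule linearI) (simp_all add: tr_def sum.distrib sum_distrib_left)

lemma linear_bellv: "linear (bellv F)"
  by (rule linearI)
    (simp_all add: bellv_def bell_def vec_eq_iff sum.distrib sum_distrib_left algebra_simps)

lemma entry_le_tr:
  assumes "\<forall>a x. 0 \<le> p $ (a, x)"
    and "\<forall>x x'. (\<Sum>a\<in>UNIV. p $ (a, x)) = (\<Sum>a\<in>UNIV. p $ (a, x'))"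
  shows "p $ (a, x) \<le> tr p"
proof -
  have "p $ (a, x) \<le> (\<Sum>a'\<in>UNIV. p $ (a', x))"
    using assms(1) by (intro member_le_sum) auto
  also have "\<dots> = tr p"
    unfolding tr_def using assms(2) by blast
  finally show ?thesis .
qed

lemma feas_vals_le_1:
  assumes "admissible_cone Q K" and "v \<in> feas_vals K Xr F S"
  shows "v \<le> 1"
proof -
  obtain P where v: "v = (\<Sum>a\<in>UNIV. \<Sum>x\<in>Xr. P a x $ (a, x))"
    and PK: "\<forall>a. \<forall>x\<in>Xr. P a x \<in> K" and tr1: "(\<Sum>a\<in>UNIV. \<Sum>x\<in>Xr. tr (P a x)) = 1"
    using assms(2) unfolding feas_vals_def by blast
  have "P a x $ (a, x) \<le> tr (P a x)" if "x \<in> Xr" for a x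
    using assms(1) PK that unfolding admissible_cone_def by (intro entry_le_tr) auto
  then have "v \<le> (\<Sum>a\<in>UNIV. \<Sum>x\<in>Xr. tr (P a x))"
    unfolding v by (intro sum_mono) auto
  with tr1 show ?thesis by simp
qed

lemma bdd_above_feas_vals: "admissible_cone Q K \<Longrightarrow> bdd_above (feas_vals K Xr F S)"
  using feas_vals_le_1 by (meson bdd_above.I)

lemma weighted_copies_in_feas_vals:
  assumes "conic K" "p \<in> K" "tr p = 1"
    and w_nonneg: "\<And>a x. x \<in> Xr \<Longrightarrow> 0 \<le> w a x"
    and w_sum: "(\<Sum>a\<in>UNIV. \<Sum>x\<in>Xr. w a x) = 1"
  shows "(\<Sum>a\<in>UNIV. \<Sum>x\<in>Xr. w a x * p $ (a, x)) \<in> feas_vals K Xr F (\<lambda>z. z = bellv F p)"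
  unfolding feas_vals_def
proof (intro CollectI exI conjI)
  let ?P = "\<lambda>a x. w a x *\<^sub>R p"
  show "\<forall>a. \<forall>x\<in>Xr. ?P a x \<in> K"
    using w_nonneg by (auto intro: conicD[OF assms(1,2)])
  show "(\<Sum>a\<in>UNIV. \<Sum>x\<in>Xr. tr (?P a x)) = 1"
    using w_sum assms(3) by (simp add: linear_scale[OF linear_tr])
  show "(\<Sum>a\<in>UNIV. \<Sum>x\<in>Xr. bellv F (?P a x)) = bellv F p"
    using w_sum by (simp add: linear_scale[OF linear_bellv] scaleR_sum_left[symmetric])
qed simp

lemma convex_combination_in_feas_vals:
  assumes "convex K" "0 \<le> q" "q \<le> 1"
    and "v1 \<in> feas_vals K Xr F (\<lambda>z. z = y1)" and "v2 \<in> feas_vals K Xr F (\<lambda>z. z = y2)"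
  shows "q * v1 + (1 - q) * v2 \<in> feas_vals K Xr F (\<lambda>z. z = q *\<^sub>R y1 + (1 - q) *\<^sub>R y2)"
proof -
  obtain P1 where v1: "v1 = (\<Sum>a\<in>UNIV. \<Sum>x\<in>Xr. P1 a x $ (a, x))"
    and K1: "\<forall>a. \<forall>x\<in>Xr. P1 a x \<in> K" and tr1: "(\<Sum>a\<in>UNIV. \<Sum>x\<in>Xr. tr (P1 a x)) = 1"
    and y1: "(\<Sum>a\<in>UNIV. \<Sum>x\<in>Xr. bellv F (P1 a x)) = y1"
    using assms(4) unfolding feas_vals_def by blast
  obtain P2 where v2: "v2 = (\<Sum>a\<in>UNIV. \<Sum>x\<in>Xr. P2 a x $ (a, x))"
    and K2: "\<forall>a. \<forall>x\<in>Xr. P2 a x \<in> K" and tr2: "(\<Sum>a\<in>UNIV. \<Sum>x\<in>Xr. tr (P2 a x)) = 1"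
    and y2: "(\<Sum>a\<in>UNIV. \<Sum>x\<in>Xr. bellv F (P2 a x)) = y2"
    using assms(5) unfolding feas_vals_def by blast
  show ?thesis
    unfolding feas_vals_def
  proof (intro CollectI exI conjI)
    let ?P = "\<lambda>a x. q *\<^sub>R P1 a x + (1 - q) *\<^sub>R P2 a x"
    show "\<forall>a. \<forall>x\<in>Xr. ?P a x \<in> K"
      using K1 K2 assms(1-3) by (auto intro: convexD)
    show "(\<Sum>a\<in>UNIV. \<Sum>x\<in>Xr. tr (?P a x)) = 1"
      using tr1 tr2 by (simp add: linear_add[OF linear_tr] linear_scale[OF linear_tr]
          sum.distrib sum_distrib_left[symmetric])
    show "(\<Sum>a\<in>UNIV. \<Sum>x\<in>Xr. bellv F (?P a x)) = q *\<^sub>R y1 + (1 - q) *\<^sub>R y2"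
      using y1 y2 by (simp add: linear_add[OF linear_bellv] linear_scale[OF linear_bellv]
          sum.distrib scaleR_sum_right[symmetric])
    show "q * v1 + (1 - q) * v2 = (\<Sum>a\<in>UNIV. \<Sum>x\<in>Xr. ?P a x $ (a, x))"
      unfolding v1 v2 by (simp add: sum.distrib sum_distrib_left)
  qed
qed

lemma convex_combination_cSup_le:
  fixes A B :: "real set"
  assumes "0 \<le> q" "q \<le> 1" "A \<noteq> {}" "B \<noteq> {}"
    and bound: "\<And>a b. a \<in> A \<Longrightarrow> b \<in> B \<Longrightarrow> q * a + (1 - q) * b \<le> S"
  shows "q * Sup A + (1 - q) * Sup B \<le> S"
proof (rule field_le_epsilon)
  fix e :: real assume "0 < e"
  obtain a where a: "a \<in> A" "Sup A - e < a"
    using less_cSupE[of "Sup A - e" A] \<open>0 < e\<close> assms(3) by auto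
  obtain b where b: "b \<in> B" "Sup B - e < b"
    using less_cSupE[of "Sup B - e" B] \<open>0 < e\<close> assms(4) by auto
  have "q * (Sup A - e) + (1 - q) * (Sup B - e) \<le> q * a + (1 - q) * b"
    using a b assms(1,2) by (intro add_mono mult_left_mono) auto
  also have "\<dots> \<le> S"
    by (rule bound[OF a(1) b(1)])
  finally show "q * Sup A + (1 - q) * Sup B \<le> S + e"
    by (simp add: algebra_simps)
qed

lemma Gfun_upper:
  "admissible_cone Q K \<Longrightarrow> v \<in> feas_vals K Xr F (\<lambda>z. z = y) \<Longrightarrow> v \<le> Gfun K Xr F y"
  unfolding Gfun_def by (rule cSup_upper[OF _ bdd_above_feas_vals])

lemma Gfun_le_1:
  "admissible_cone Q K \<Longrightarrow> feas_vals K Xr F (\<lambda>z. z = y) \<noteq> {} \<Longrightarrow> Gfun K Xr F y \<le> 1"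
  unfolding Gfun_def by (rule cSup_least) (auto dest: feas_vals_le_1)

lemma Gfun_concave:
  assumes K: "admissible_cone Q K" and q: "0 \<le> q" "q \<le> 1"
    and feasible: "feas_vals K Xr F (\<lambda>z. z = y1) \<noteq> {}" "feas_vals K Xr F (\<lambda>z. z = y2) \<noteq> {}"
  shows "q * Gfun K Xr F y1 + (1 - q) * Gfun K Xr F y2 \<le> Gfun K Xr F (q *\<^sub>R y1 + (1 - q) *\<^sub>R y2)"
  unfolding Gfun_def[of K Xr F y1] Gfun_def[of K Xr F y2]
proof (rule convex_combination_cSup_le[OF q feasible])
  fix v1 v2
  assume "v1 \<in> feas_vals K Xr F (\<lambda>z. z = y1)" "v2 \<in> feas_vals K Xr F (\<lambda>z. z = y2)"
  moreover have "convex K"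
    using K by (simp add: admissible_cone_def convex_cone_def)
  ultimately show "q * v1 + (1 - q) * v2 \<le> Gfun K Xr F (q *\<^sub>R y1 + (1 - q) *\<^sub>R y2)"
    using q by (intro Gfun_upper[OF K] convex_combination_in_feas_vals)
qed

lemma Gfun_le_Gbox:
  assumes "admissible_cone Q K" "feas_vals K Xr F (\<lambda>z. z = y) \<noteq> {}"
    and "\<forall>i. lo i \<le> ereal (y $ i) \<and> ereal (y $ i) \<le> hi i"
  shows "Gfun K Xr F y \<le> Gbox K Xr F lo hi"
proof -
  let ?V = "feas_vals K Xr F (\<lambda>z. \<forall>i. lo i \<le> ereal (z $ i) \<and> ereal (z $ i) \<le> hi i)"
  have sub: "feas_vals K Xr F (\<lambda>z. z = y) \<subseteq> ?V"
    using assms(3) unfolding feas_vals_def by blast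
  then have "Gbox K Xr F lo hi = Sup ?V"
    using assms(2) unfolding Gbox_def Let_def by auto
  then show ?thesis
    unfolding Gfun_def using cSup_subset_mono[OF assms(2) bdd_above_feas_vals[OF assms(1)] sub]
    by simp
qed

lemma admissible_cone_behavior:
  assumes "admissible_cone Q K" "p \<in> Q"
  shows "conic K" "p \<in> K"
proof -
  show "conic K"
    using assms(1) by (simp add: admissible_cone_def convex_cone_def)
  have "{q *\<^sub>R p | q p. q \<ge> 0 \<and> p \<in> Q} \<subseteq> K"
    using assms(1) by (simp add: admissible_cone_def)
  moreover have "p \<in> {q *\<^sub>R p | q p. q \<ge> 0 \<and> p \<in> Q}"
    using assms(2) by (intro CollectI exI[of _ 1] exI[of _ p]) simp
  ultimately show "p \<in> K" by (rule subsetD)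
qed

lemma tr_behavior: "behavior p \<Longrightarrow> tr p = 1"
  unfolding behavior_def tr_def by simp

context
  fixes Q K :: "('a::finite, 'x::finite) bvec set" and F :: "(('a, 'x) bvec) ^ ('i::finite)"
    and Xr :: "'x set" and p :: "('a, 'x) bvec"
  assumes K: "admissible_cone Q K" and p: "p \<in> Q" "behavior p"
begin

lemma entry_in_feas_vals:
  assumes "x \<in> Xr"
  shows "p $ (a, x) \<in> feas_vals K Xr F (\<lambda>z. z = bellv F p)"
  using weighted_copies_in_feas_vals[OF admissible_cone_behavior[OF K p(1)] tr_behavior[OF p(2)],
      of Xr "\<lambda>a' x'. of_bool (a' = a) * of_bool (x' = x)" F] assms
  by (simp add: mult.assoc flip: sum_distrib_left)

lemma inverse_card_in_feas_vals:
  assumes "x \<in> Xr"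
  shows "1 / real CARD('a) \<in> feas_vals K Xr F (\<lambda>z. z = bellv F p)"
  using weighted_copies_in_feas_vals[OF admissible_cone_behavior[OF K p(1)] tr_behavior[OF p(2)],
      of Xr "\<lambda>a' x'. of_bool (x' = x) / real CARD('a)" F] assms p(2)
  by (simp add: behavior_def sum_divide_distrib[symmetric])

lemma entry_le_Gfun: "x \<in> Xr \<Longrightarrow> p $ (a, x) \<le> Gfun K Xr F (bellv F p)"
  by (rule Gfun_upper[OF K entry_in_feas_vals])

lemma inverse_card_le_Gfun: "x \<in> Xr \<Longrightarrow> 1 / real CARD('a) \<le> Gfun K Xr F (bellv F p)"
  by (rule Gfun_upper[OF K inverse_card_in_feas_vals])

lemma feas_vals_nonempty: "Xr \<noteq> {} \<Longrightarrow> feas_vals K Xr F (\<lambda>z. z = bellv F p) \<noteq> {}"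
  using inverse_card_in_feas_vals by blast

lemma Gfun_pos:
  assumes "Xr \<noteq> {}"
  shows "0 < Gfun K Xr F (bellv F p)"
proof -
  obtain x where "x \<in> Xr" using assms by blast
  have "0 < 1 / real CARD('a)" by simp
  also have "\<dots> \<le> Gfun K Xr F (bellv F p)"
    using inverse_card_le_Gfun[OF \<open>x \<in> Xr\<close>] .
  finally show ?thesis .
qed

end

lemma neg_log_le_convex_combination:
  fixes b g g1 g2 q :: real
  assumes "1 < b" "0 < g1" "0 < g2" "0 \<le> q" "q \<le> 1" "q * g1 + (1 - q) * g2 \<le> g"
  shows "- log b g \<le> q * - log b g1 + (1 - q) * - log b g2"
proof -
  have "q * log b g1 + (1 - q) * log b g2 \<le> log b (q * g1 + (1 - q) * g2)"
    using concave_onD[OF log_concave[OF assms(1)], of "1 - q" g1 g2] assms(2-5) by simp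
  also have "\<dots> \<le> log b g"
  proof (rule log_mono)
    show "0 < q * g1 + (1 - q) * g2"
      using assms(2-5) by (cases "q = 0") (auto intro: add_pos_nonneg)
  qed (use assms in auto)
  finally show ?thesis by simp
qed

lemma rb_function_neg_log_Gfun:
  fixes Q K :: "('a::finite, 'x::finite) bvec set" and F :: "(('a, 'x) bvec) ^ ('i::finite)"
  assumes Q: "\<forall>p\<in>Q. behavior p" and K: "admissible_cone Q K" and Xr: "Xr \<noteq> {}"
  shows "rb_function Q F Xr (\<lambda>y. - log 2 (Gfun K Xr F y))"
proof -
  have beh: "behavior p" if "p \<in> Q" for p
    using Q that by blast
  have pos: "0 < Gfun K Xr F (bellv F p)" if "p \<in> Q" for p
    using Gfun_pos[OF K that beh[OF that] Xr] .
  have feasible: "feas_vals K Xr F (\<lambda>z. z = bellv F p) \<noteq> {}" if "p \<in> Q" for p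
    using feas_vals_nonempty[OF K that beh[OF that] Xr] .
  obtain x0 where x0: "x0 \<in> Xr" using Xr by blast
  show ?thesis
    unfolding rb_function_def
  proof (intro conjI ballI allI impI)
    fix p assume p: "p \<in> Q"
    show "0 \<le> - log 2 (Gfun K Xr F (bellv F p))"
      using Gfun_le_1[OF K feasible[OF p]] pos[OF p] by simp
    have "log 2 (1 / real CARD('a)) \<le> log 2 (Gfun K Xr F (bellv F p))"
      using inverse_card_le_Gfun[OF K p beh[OF p] x0] by (intro log_mono) auto
    then show "- log 2 (Gfun K Xr F (bellv F p)) \<le> log 2 (real CARD('a))"
      by (simp add: log_divide)
  next
    fix p a x assume p: "p \<in> Q" and "x \<in> Xr" "0 < p $ (a, x)"
    moreover have "p $ (a, x) \<le> Gfun K Xr F (bellv F p)"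
      by (rule entry_le_Gfun[OF K p beh[OF p] \<open>x \<in> Xr\<close>])
    ultimately show "- log 2 (Gfun K Xr F (bellv F p)) \<le> - log 2 (p $ (a, x))"
      by (simp add: log_mono)
  next
    fix q :: real and p1 p2 assume q: "q \<in> {0..1}" and p: "p1 \<in> Q" "p2 \<in> Q"
    have "q * Gfun K Xr F (bellv F p1) + (1 - q) * Gfun K Xr F (bellv F p2)
        \<le> Gfun K Xr F (q *\<^sub>R bellv F p1 + (1 - q) *\<^sub>R bellv F p2)"
      using q by (intro Gfun_concave[OF K _ _ feasible[OF p(1)] feasible[OF p(2)]]) auto
    from neg_log_le_convex_combination[OF _ pos[OF p(1)] pos[OF p(2)] _ _ this] q
    show "- log 2 (Gfun K Xr F (q *\<^sub>R bellv F p1 + (1 - q) *\<^sub>R bellv F p2))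
        \<le> q * - log 2 (Gfun K Xr F (bellv F p1)) + (1 - q) * - log 2 (Gfun K Xr F (bellv F p2))"
      by simp
  qed (fact Xr)
qed

lemma neg_log_Gbox_le_INF:
  fixes Q K :: "('a::finite, 'x::finite) bvec set" and F :: "(('a, 'x) bvec) ^ ('i::finite)"
  assumes Q: "\<forall>p\<in>Q. behavior p" and K: "admissible_cone Q K" and Xr: "Xr \<noteq> {}"
  shows "ereal (- log 2 (Gbox K Xr F lo hi))
    \<le> (INF y \<in> {bellv F p | p. p \<in> Q} \<inter> {y. \<forall>i. lo i \<le> ereal (y $ i) \<and> ereal (y $ i) \<le> hi i}.
         ereal (- log 2 (Gfun K Xr F y)))"
proof (rule INF_greatest)
  fix y assume "y \<in> {bellv F p | p. p \<in> Q} \<inter> {y. \<forall>i. lo i \<le> ereal (y $ i) \<and> ereal (y $ i) \<le> hi i}"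
  then obtain p where p: "p \<in> Q" "behavior p" and y: "y = bellv F p"
    and box: "\<forall>i. lo i \<le> ereal (y $ i) \<and> ereal (y $ i) \<le> hi i"
    using Q by blast
  have "Gfun K Xr F y \<le> Gbox K Xr F lo hi"
    unfolding y by (rule Gfun_le_Gbox[OF K feas_vals_nonempty[OF K p Xr] box[unfolded y]])
  moreover have "0 < Gfun K Xr F y"
    unfolding y by (rule Gfun_pos[OF K p Xr])
  ultimately have "log 2 (Gfun K Xr F y) \<le> log 2 (Gbox K Xr F lo hi)"
    by (intro log_mono) auto
  then show "ereal (- log 2 (Gbox K Xr F lo hi)) \<le> ereal (- log 2 (Gfun K Xr F y))" by simp
qed

theorem mainTheorem5:
  fixes Q K :: "('a::finite, 'x::finite) bvec set"
    and F :: "(('a, 'x) bvec) ^ ('i::finite)"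
    and Xr :: "'x set"
  assumes Qbeh: "\<forall>p\<in>Q. behavior p"
    and Qconv: "convex Q"
    and Kadm: "admissible_cone Q K"
    and Xr: "Xr \<noteq> {}"
  shows "rb_function Q F Xr (\<lambda>y. - log 2 (Gfun K Xr F y))
       \<and> (\<forall>lo hi :: 'i \<Rightarrow> ereal. (\<forall>i. lo i \<le> hi i) \<longrightarrow>
            ereal (- log 2 (Gbox K Xr F lo hi))
              \<le> (INF y \<in> {bellv F p | p. p \<in> Q} \<inter> {y. \<forall>i. lo i \<le> ereal (y $ i) \<and> ereal (y $ i) \<le> hi i}.
                   ereal (- log 2 (Gfun K Xr F y))))"
  using rb_function_neg_log_Gfun[OF Qbeh Kadm Xr] neg_log_Gbox_le_INF[OF Qbeh Kadm Xr] by blast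

end
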